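(* Let $\mathcal{H}$ be a separable Hilbert space and $H$ a positive Hermitian operator on $\mathcal{H}$ with purely discrete spectrum, such that there is no infinite-dimensional subspace on which $H$ is bounded, and let $E>0$. Given any $\epsilon>0$ there is $\delta>0$ such that for any positive operators $A,A'$ with $\mathrm{Tr}\,AH\le E$ and $\mathrm{Tr}\,A'H\le E$, if $\|A-A'\|_2<\delta$ then $|\mathrm{Tr}(A-A')|<\epsilon$.
   Context: $\|\cdot\|_2$ is the Hilbert–Schmidt norm $\|A\|_2=\sqrt{\mathrm{Tr}\,A^\dagger A}$. For positive $A$, $\mathrm{Tr}\,AH=\sum_n\langle n|A|n\rangle E_n\in[0,\infty]$ in an eigenbasis $\{|n\rangle\}$ of $H$ with eigenvalues $E_n$. *)

theory Defs
  imports "HOL-Analysis.Analysis" "HOL-Library.Function_Algebras"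
begin

text \<open>Concrete model of a separable Hilbert space: l2 over a countable index type 'i,
  the index set of an orthonormal eigenbasis of H.  Vectors are functions 'i => complex.\<close>

definition l2 :: "('i \<Rightarrow> complex) set" where
  "l2 = {x. (\<lambda>i. (cmod (x i))^2) summable_on UNIV}"

definition cinner :: "('i \<Rightarrow> complex) \<Rightarrow> ('i \<Rightarrow> complex) \<Rightarrow> complex" where
  "cinner x y = (\<Sum>\<^sub>\<infinity>i. cnj (x i) * y i)"

definition l2norm :: "('i \<Rightarrow> complex) \<Rightarrow> real" where
  "l2norm x = sqrt (\<Sum>\<^sub>\<infinity>i. (cmod (x i))^2)"

definition ket :: "'i \<Rightarrow> ('i \<Rightarrow> complex)" where
  "ket n = (\<lambda>i. if i = n then 1 else 0)"

text \<open>Bounded linear operator on l2 (values outside l2 are irrelevant).\<close>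
definition bounded_op :: "(('i \<Rightarrow> complex) \<Rightarrow> ('i \<Rightarrow> complex)) \<Rightarrow> bool" where
  "bounded_op T \<longleftrightarrow>
     (\<forall>x\<in>l2. T x \<in> l2) \<and>
     (\<forall>x\<in>l2. \<forall>y\<in>l2. T (x + y) = T x + T y) \<and>
     (\<forall>x\<in>l2. \<forall>c. T (\<lambda>i. c * x i) = (\<lambda>i. c * T x i)) \<and>
     (\<exists>C. \<forall>x\<in>l2. l2norm (T x) \<le> C * l2norm x)"

definition positive_op :: "(('i \<Rightarrow> complex) \<Rightarrow> ('i \<Rightarrow> complex)) \<Rightarrow> bool" where
  "positive_op T \<longleftrightarrow> bounded_op T \<and>
     (\<forall>x\<in>l2. Im (cinner x (T x)) = 0 \<and> Re (cinner x (T x)) \<ge> 0)"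

definition matel :: "(('i \<Rightarrow> complex) \<Rightarrow> ('i \<Rightarrow> complex)) \<Rightarrow> 'i \<Rightarrow> 'i \<Rightarrow> complex" where
  "matel T m n = cinner (ket m) (T (ket n))"

text \<open>Tr(A H) = sum_n <n|A|n> E_n in [0,\<infinity>], H diagonal with eigenvalues ev.\<close>
definition trAH :: "(('i \<Rightarrow> complex) \<Rightarrow> ('i \<Rightarrow> complex)) \<Rightarrow> ('i \<Rightarrow> real) \<Rightarrow> ennreal" where
  "trAH A ev = (\<Sum>\<^sub>\<infinity>n. ennreal (Re (matel A n n) * ev n))"

definition hs_norm :: "(('i \<Rightarrow> complex) \<Rightarrow> ('i \<Rightarrow> complex)) \<Rightarrow> ennreal" where
  "hs_norm T = (if (\<lambda>(m,n). (cmod (matel T m n))^2) summable_on UNIV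
                then ennreal (sqrt (\<Sum>\<^sub>\<infinity>(m,n). (cmod (matel T m n))^2)) else top)"

definition trace_op :: "(('i \<Rightarrow> complex) \<Rightarrow> ('i \<Rightarrow> complex)) \<Rightarrow> complex" where
  "trace_op T = (\<Sum>\<^sub>\<infinity>n. matel T n n)"

definition H_dom :: "('i \<Rightarrow> real) \<Rightarrow> ('i \<Rightarrow> complex) set" where
  "H_dom ev = {x \<in> l2. (\<lambda>i. (ev i * cmod (x i))^2) summable_on UNIV}"

definition H_op :: "('i \<Rightarrow> real) \<Rightarrow> ('i \<Rightarrow> complex) \<Rightarrow> ('i \<Rightarrow> complex)" where
  "H_op ev x = (\<lambda>i. complex_of_real (ev i) * x i)"

definition l2_subspace :: "('i \<Rightarrow> complex) set \<Rightarrow> bool" where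
  "l2_subspace V \<longleftrightarrow> V \<subseteq> l2 \<and> 0 \<in> V \<and>
     (\<forall>x\<in>V. \<forall>y\<in>V. x + y \<in> V) \<and> (\<forall>x\<in>V. \<forall>c. (\<lambda>i. c * x i) \<in> V)"

definition inf_dim :: "('i \<Rightarrow> complex) set \<Rightarrow> bool" where
  "inf_dim V \<longleftrightarrow> (\<forall>N::nat. \<exists>v :: nat \<Rightarrow> ('i \<Rightarrow> complex).
      (\<forall>k<N. v k \<in> V) \<and>
      (\<forall>c :: nat \<Rightarrow> complex. (\<forall>i. (\<Sum>k<N. c k * v k i) = 0) \<longrightarrow> (\<forall>k<N. c k = 0)))"

definition H_bounded_on :: "('i \<Rightarrow> real) \<Rightarrow> ('i \<Rightarrow> complex) set \<Rightarrow> bool" where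
  "H_bounded_on ev V \<longleftrightarrow> V \<subseteq> H_dom ev \<and>
     (\<exists>C. \<forall>x\<in>V. l2norm (H_op ev x) \<le> C * l2norm x)"

end

theory Submission imports Defs begin

(* For M > 0 the eigenvectors with eigenvalue at most M span a subspace on which H is bounded
   by M, so by hypothesis only finitely many eigenvalues lie below M.  A positive A with
   Tr AH <= E has nonnegative diagonal, and the part of its trace coming from eigenvalues
   above M is at most E/M (a Markov-type estimate).  Hence Tr(A - A') is the finite sum of the
   diagonal differences below M, each bounded by the Hilbert-Schmidt norm, plus a difference of
   two tails in [0, E/M]; choosing M = 4E/eps and then delta small makes this less than eps. *)

lemma cinner_ket_left: "cinner (ket m) y = y m"
proof -
  have "cinner (ket m) y = (\<Sum>\<^sub>\<infinity>i\<in>{m}. cnj (ket m i) * y i)"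
    unfolding cinner_def by (rule infsum_cong_neutral) (auto simp: ket_def)
  then show ?thesis by (simp add: ket_def)
qed

lemma matel_eq_apply: "matel T m n = T (ket n) m"
  by (simp add: matel_def cinner_ket_left)

lemma matel_diff: "matel (A - B) m n = matel A m n - matel B m n"
  by (simp add: matel_eq_apply fun_diff_def)

lemma matel_le_hs_norm: "ennreal (cmod (matel T m n)) \<le> hs_norm T"
proof (cases "(\<lambda>(m, n). (cmod (matel T m n))\<^sup>2) summable_on UNIV")
  case True
  let ?h = "\<lambda>(m, n). (cmod (matel T m n))\<^sup>2"
  have "(cmod (matel T m n))\<^sup>2 = (\<Sum>\<^sub>\<infinity>p\<in>{(m, n)}. ?h p)" by simp
  also have "\<dots> \<le> (\<Sum>\<^sub>\<infinity>p. ?h p)"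
    using True by (intro infsum_mono_neutral) auto
  finally have "cmod (matel T m n) \<le> sqrt (\<Sum>\<^sub>\<infinity>p. ?h p)"
    using real_le_rsqrt by blast
  then show ?thesis using True by (simp add: hs_norm_def ennreal_leI)
qed (simp add: hs_norm_def)

definition fin_supp_on :: "'i set \<Rightarrow> ('i \<Rightarrow> complex) set" where
  "fin_supp_on S = {x. finite {i. x i \<noteq> 0} \<and> {i. x i \<noteq> 0} \<subseteq> S}"

lemma fin_supp_in_l2: "finite {i. x i \<noteq> 0} \<Longrightarrow> x \<in> l2"
  unfolding l2_def
  by (auto intro!: finite_nonzero_values_imp_summable_on elim: rev_finite_subset)

lemma ket_in_fin_supp_on: "n \<in> S \<Longrightarrow> ket n \<in> fin_supp_on S"
  by (auto simp: fin_supp_on_def ket_def)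

lemma ket_in_l2: "ket n \<in> l2"
  using ket_in_fin_supp_on[of n UNIV] by (auto simp: fin_supp_on_def intro: fin_supp_in_l2)

lemma l2_subspace_fin_supp_on: "l2_subspace (fin_supp_on S)"
  unfolding l2_subspace_def
proof (intro conjI ballI allI)
  show "fin_supp_on S \<subseteq> l2" by (auto simp: fin_supp_on_def intro: fin_supp_in_l2)
  show "0 \<in> fin_supp_on S" by (simp add: fin_supp_on_def)
next
  fix x y assume "x \<in> fin_supp_on S" "y \<in> fin_supp_on S"
  moreover have "{i. (x + y) i \<noteq> 0} \<subseteq> {i. x i \<noteq> 0} \<union> {i. y i \<noteq> 0}" by auto
  ultimately show "x + y \<in> fin_supp_on S" unfolding fin_supp_on_def
    by (auto dest: finite_subset)
next
  fix x c assume "x \<in> fin_supp_on S"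
  then show "(\<lambda>i. c * x i) \<in> fin_supp_on S" unfolding fin_supp_on_def
    by (auto intro: finite_subset[of _ "{i. x i \<noteq> 0}"])
qed

lemma inf_dim_fin_supp_on:
  assumes "infinite S"
  shows "inf_dim (fin_supp_on S)"
  unfolding inf_dim_def
proof
  fix N :: nat
  obtain f :: "nat \<Rightarrow> _" where f: "inj f" "range f \<subseteq> S"
    using infinite_countable_subset[OF assms] by blast
  have indep: "c j = 0"
    if zero: "\<forall>i. (\<Sum>k<N. c k * ket (f k) i) = 0" and "j < N" for c :: "nat \<Rightarrow> complex" and j
  proof -
    have "(\<Sum>k<N. c k * ket (f k) (f j)) = (\<Sum>k<N. if k = j then c k else 0)"
      using f(1) by (intro sum.cong) (auto simp: ket_def inj_eq)
    also have "\<dots> = c j" using \<open>j < N\<close> by simp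
    finally show ?thesis using zero by metis
  qed
  show "\<exists>v. (\<forall>k<N. v k \<in> fin_supp_on S) \<and>
      (\<forall>c. (\<forall>i. (\<Sum>k<N. c k * v k i) = 0) \<longrightarrow> (\<forall>k<N. c k = 0))"
    using f(2) indep by (intro exI[of _ "\<lambda>k. ket (f k)"]) (auto intro: ket_in_fin_supp_on)
qed

lemma H_bounded_on_fin_supp_on:
  assumes "\<forall>n\<in>S. \<bar>ev n\<bar> \<le> C"
  shows "H_bounded_on ev (fin_supp_on S)"
  unfolding H_bounded_on_def
proof (intro conjI exI[of _ "\<bar>C\<bar>"] ballI)
  show "fin_supp_on S \<subseteq> H_dom ev"
    unfolding H_dom_def fin_supp_on_def
    by (auto intro: fin_supp_in_l2 finite_nonzero_values_imp_summable_on elim: rev_finite_subset)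
next
  fix x assume x: "x \<in> fin_supp_on S"
  then have fin: "finite {i. x i \<noteq> 0}" by (simp add: fin_supp_on_def)
  have summable: "(\<lambda>i. (c i * cmod (x i))\<^sup>2) summable_on UNIV" for c :: "_ \<Rightarrow> real"
    by (rule finite_nonzero_values_imp_summable_on, rule rev_finite_subset[OF fin]) auto
  have H_apply: "cmod (H_op ev x i) = \<bar>ev i\<bar> * cmod (x i)" for i
    by (simp add: H_op_def norm_mult)
  have "(\<bar>ev i\<bar> * cmod (x i))\<^sup>2 \<le> (\<bar>C\<bar> * cmod (x i))\<^sup>2" for i
  proof (cases "x i = 0")
    case False
    then have "\<bar>ev i\<bar> \<le> \<bar>C\<bar>" using x assms by (force simp: fin_supp_on_def)
    then show ?thesis by (simp add: power_mono mult_right_mono)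
  qed simp
  then have "(\<Sum>\<^sub>\<infinity>i. (\<bar>ev i\<bar> * cmod (x i))\<^sup>2) \<le> (\<Sum>\<^sub>\<infinity>i. (\<bar>C\<bar> * cmod (x i))\<^sup>2)"
    by (intro infsum_mono summable)
  also have "\<dots> = C\<^sup>2 * (\<Sum>\<^sub>\<infinity>i. (cmod (x i))\<^sup>2)"
    by (simp add: power_mult_distrib infsum_cmult_right')
  finally show "l2norm (H_op ev x) \<le> \<bar>C\<bar> * l2norm x"
    unfolding l2norm_def H_apply by (metis real_sqrt_abs real_sqrt_le_mono real_sqrt_mult)
qed

lemma finite_eigenvalues_le:
  assumes no_bdd: "\<forall>V. l2_subspace V \<and> inf_dim V \<longrightarrow> \<not> H_bounded_on ev V"
    and ev_nonneg: "\<forall>n. ev n \<ge> 0"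
  shows "finite {n. ev n \<le> M}"
proof (rule ccontr)
  assume "infinite {n. ev n \<le> M}"
  moreover have "H_bounded_on ev (fin_supp_on {n. ev n \<le> M})"
    using ev_nonneg by (intro H_bounded_on_fin_supp_on) auto
  ultimately show False
    using no_bdd l2_subspace_fin_supp_on inf_dim_fin_supp_on by blast
qed

lemma positive_op_diag_real:
  assumes "positive_op A"
  shows "matel A n n = complex_of_real (Re (matel A n n))"
  using assms ket_in_l2[of n] by (simp add: positive_op_def matel_def complex_eq_iff)

lemma positive_op_diag_nonneg:
  assumes "positive_op A"
  shows "0 \<le> Re (matel A n n)"
  using assms ket_in_l2[of n] by (simp add: positive_op_def matel_def)

lemma has_sum_sublevel_plus_tail:
  fixes f w :: "'a \<Rightarrow> real"
  assumes f_nonneg: "\<And>n. 0 \<le> f n" and w_nonneg: "\<And>n. 0 \<le> w n"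
    and energy: "(\<Sum>\<^sub>\<infinity>n. ennreal (f n * w n)) \<le> ennreal E" and "0 \<le> E" "0 < M"
    and fin: "finite {n. w n \<le> M}"
  shows "\<exists>a. (f has_sum (sum f {n. w n \<le> M} + a)) UNIV \<and> 0 \<le> a \<and> a \<le> E / M"
proof -
  let ?S = "{n. w n \<le> M}"
  have markov: "sum f F \<le> E / M" if F: "finite F" "F \<subseteq> - ?S" for F
  proof -
    have "sum f F \<le> (\<Sum>n\<in>F. f n * w n / M)"
    proof (rule sum_mono)
      fix n assume "n \<in> F"
      then have "f n * M \<le> f n * w n" using F f_nonneg[of n] by (intro mult_left_mono) auto
      then show "f n \<le> f n * w n / M" using \<open>0 < M\<close> by (simp add: pos_le_divide_eq)
    qed
    also have "\<dots> = (\<Sum>n\<in>F. f n * w n) / M" by (simp add: sum_divide_distrib)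
    also have "(\<Sum>n\<in>F. f n * w n) \<le> E"
    proof -
      have "ennreal (\<Sum>n\<in>F. f n * w n) = (\<Sum>\<^sub>\<infinity>n\<in>F. ennreal (f n * w n))"
        using F f_nonneg w_nonneg by (simp add: sum_ennreal)
      also have "\<dots> \<le> (\<Sum>\<^sub>\<infinity>n. ennreal (f n * w n))"
        by (intro infsum_mono_neutral nonneg_summable_on_complete) auto
      also note energy
      finally show ?thesis using \<open>0 \<le> E\<close> by simp
    qed
    then have "(\<Sum>n\<in>F. f n * w n) / M \<le> E / M" using \<open>0 < M\<close> by (simp add: divide_right_mono)
    finally show ?thesis .
  qed
  have "f summable_on - ?S"
    using f_nonneg markov by (intro nonneg_bdd_above_summable_on bdd_aboveI[of _ "E / M"]) auto
  then obtain a where tail: "(f has_sum a) (- ?S)" unfolding summable_on_def by blast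
  have "(f has_sum (sum f ?S + a)) (?S \<union> - ?S)"
    using fin tail by (intro has_sum_Un_disjoint) auto
  moreover have "0 \<le> a" using tail f_nonneg by (rule has_sum_nonneg)
  moreover have "a \<le> E / M" using tail markov by (rule has_sum_le_finite_sums)
  ultimately show ?thesis by auto
qed

lemma trace_diff_bound:
  fixes ev :: "'i \<Rightarrow> real" and E M \<eta> :: real
  assumes pos: "positive_op A" "positive_op A'" and ev_nonneg: "\<forall>n. 0 \<le> ev n"
    and energy: "trAH A ev \<le> ennreal E" "trAH A' ev \<le> ennreal E" and "0 \<le> E" "0 < M"
    and fin: "finite {n. ev n \<le> M}"
    and diag_small: "\<And>n. cmod (matel (A - A') n n) \<le> \<eta>"
  shows "(\<lambda>n. matel (A - A') n n) summable_on UNIV \<and>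
    cmod (trace_op (A - A')) \<le> card {n. ev n \<le> M} * \<eta> + E / M"
proof -
  let ?S = "{n. ev n \<le> M}"
  define d d' where "d n = Re (matel A n n)" and "d' n = Re (matel A' n n)" for n
  obtain a where a: "(d has_sum (sum d ?S + a)) UNIV" "0 \<le> a" "a \<le> E / M"
    using has_sum_sublevel_plus_tail[of d ev E M] positive_op_diag_nonneg[OF pos(1)]
      ev_nonneg energy(1) \<open>0 \<le> E\<close> \<open>0 < M\<close> fin by (auto simp: d_def trAH_def)
  obtain a' where a': "(d' has_sum (sum d' ?S + a')) UNIV" "0 \<le> a'" "a' \<le> E / M"
    using has_sum_sublevel_plus_tail[of d' ev E M] positive_op_diag_nonneg[OF pos(2)]
      ev_nonneg energy(2) \<open>0 \<le> E\<close> \<open>0 < M\<close> fin by (auto simp: d'_def trAH_def)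
  define t where "t = (\<Sum>n\<in>?S. d n - d' n) + (a - a')"
  have diag: "matel (A - A') n n = complex_of_real (d n - d' n)" for n
    using positive_op_diag_real[OF pos(1), of n] positive_op_diag_real[OF pos(2), of n]
    by (simp add: matel_diff d_def d'_def)
  have neg: "((\<lambda>n. - d' n) has_sum - (sum d' ?S + a')) UNIV"
    using a'(1) by (simp add: has_sum_uminus add_ac)
  have "sum d ?S + a + - (sum d' ?S + a') = t" by (simp add: t_def sum_subtractf)
  with has_sum_add[OF a(1) neg] have "((\<lambda>n. d n - d' n) has_sum t) UNIV" by simp
  then have trace: "((\<lambda>n. matel (A - A') n n) has_sum complex_of_real t) UNIV"
    unfolding diag by (rule has_sum_of_real)
  have "\<bar>t\<bar> \<le> \<bar>\<Sum>n\<in>?S. d n - d' n\<bar> + \<bar>a - a'\<bar>"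
    unfolding t_def by (rule abs_triangle_ineq)
  also have "\<dots> \<le> (\<Sum>n\<in>?S. \<bar>d n - d' n\<bar>) + \<bar>a - a'\<bar>"
    by (rule add_right_mono, rule sum_abs)
  also have "\<dots> \<le> card ?S * \<eta> + E / M"
  proof (rule add_mono)
    have "\<bar>d n - d' n\<bar> \<le> \<eta>" for n
      using diag_small[of n] unfolding diag norm_of_real .
    then show "(\<Sum>n\<in>?S. \<bar>d n - d' n\<bar>) \<le> card ?S * \<eta>"
      using sum_mono[of ?S "\<lambda>n. \<bar>d n - d' n\<bar>" "\<lambda>_. \<eta>"] by simp
    show "\<bar>a - a'\<bar> \<le> E / M" using a(2,3) a'(2,3) by linarith
  qed
  finally show ?thesis
    using trace by (auto simp: summable_on_def trace_op_def infsumI)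
qed

theorem mainTheorem6:
  fixes ev :: "'i::countable \<Rightarrow> real" and E \<epsilon> :: real
  assumes H_pos: "\<forall>n. ev n \<ge> 0"
    and no_bdd: "\<forall>V. l2_subspace V \<and> inf_dim V \<longrightarrow> \<not> H_bounded_on ev V"
    and E_pos: "E > 0"
    and eps_pos: "\<epsilon> > 0"
  shows "\<exists>\<delta>>0. \<forall>A A' :: ('i \<Rightarrow> complex) \<Rightarrow> ('i \<Rightarrow> complex).
           positive_op A \<and> positive_op A' \<and>
           trAH A ev \<le> ennreal E \<and> trAH A' ev \<le> ennreal E \<and>
           hs_norm (A - A') < ennreal \<delta> \<longrightarrow>
             (\<lambda>n. matel (A - A') n n) summable_on UNIV \<and>
             cmod (trace_op (A - A')) < \<epsilon>"
proof -
  define M where "M = 4 * E / \<epsilon>"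
  let ?N = "real (card {n. ev n \<le> M})"
  define \<delta> where "\<delta> = \<epsilon> / (4 * (?N + 1))"
  have "0 < M" "E / M = \<epsilon> / 4" using E_pos eps_pos by (simp_all add: M_def)
  have "0 < \<delta>" "?N * \<delta> \<le> \<epsilon> / 4" using eps_pos by (simp_all add: \<delta>_def field_simps)
  have "(\<lambda>n. matel (A - A') n n) summable_on UNIV \<and> cmod (trace_op (A - A')) < \<epsilon>"
    if "positive_op A" "positive_op A'" "trAH A ev \<le> ennreal E" "trAH A' ev \<le> ennreal E"
      and hs: "hs_norm (A - A') < ennreal \<delta>" for A A'
  proof -
    have "cmod (matel (A - A') n n) \<le> \<delta>" for n
      using order.strict_trans1[OF matel_le_hs_norm hs] \<open>0 < \<delta>\<close> by (simp add: ennreal_less_iff less_imp_le)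
    then show ?thesis
      using trace_diff_bound[OF that(1,2) H_pos that(3,4), of M \<delta>] finite_eigenvalues_le[OF no_bdd H_pos]
        E_pos eps_pos \<open>0 < M\<close> \<open>E / M = \<epsilon> / 4\<close> \<open>?N * \<delta> \<le> \<epsilon> / 4\<close> by auto
  qed
  with \<open>0 < \<delta>\<close> show ?thesis by blast
qed

end
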